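(* Let $f(x)=\ln(e-x)$ for $0\le x\le e-1$ and $f(x)=0$ for $x>e-1$. For every instance, if $r^\star$ is the stopping rate of $\mathrm{EnvyFree}(f)$ computed from the true costs, then $\sum_{i\in S}u_if_{r^\star}(c_i/u_i)\ge(1-1/e)U^\star$.
   Context: Setting: a buyer with budget $B>0$ faces a finite set $S$ of sellers; seller $i$ owns one divisible item giving utility $u_i>0$ and has cost $c_i\ge0$; buying fraction $x_i\in[0,1]$ costs $x_ic_i$ and gives utility $x_iu_i$. $U^\star=\max\{\sum_iu_i\alpha_i:\alpha\in[0,1]^S,\sum_ic_i\alpha_i\le B\}$. For $r>0$: $f_r(x)=f(x/r)$, $Q_r(x)=xf_r(x)+\int_x^\infty f_r(y)\,dy$, $P_{i,r}(x)=u_iQ_r(x/u_i)$. The stopping rate $r^\star$ of $\mathrm{EnvyFree}(f)$ on cost vector $c$ is the value at which, decreasing $r$ from $\infty$, the nondecreasing continuous function $r\mapsto\sum_iP_{i,r}(c_i)$ first equals $B$; $\mathrm{EnvyFree}(f)$ buys $f_{r^\star}(c_i/u_i)$ of item $i$ and pays $P_{i,r^\star}(c_i)$. *)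

theory Defs
  imports "HOL-Analysis.Analysis"
begin

definition f_ln :: "real \<Rightarrow> real" where
  "f_ln x = (if 0 \<le> x \<and> x \<le> exp 1 - 1 then ln (exp 1 - x) else 0)"

definition f_rate :: "(real \<Rightarrow> real) \<Rightarrow> real \<Rightarrow> real \<Rightarrow> real" where
  "f_rate f r x = f (x / r)"

definition Q_rate :: "(real \<Rightarrow> real) \<Rightarrow> real \<Rightarrow> real \<Rightarrow> real" where
  "Q_rate f r x = x * f_rate f r x + integral {x..} (\<lambda>y. f_rate f r y)"

definition P_rate :: "(real \<Rightarrow> real) \<Rightarrow> real \<Rightarrow> real \<Rightarrow> real \<Rightarrow> real" where
  "P_rate f ui r x = ui * Q_rate f r (x / ui)"

definition total_payment :: "(real \<Rightarrow> real) \<Rightarrow> 'a set \<Rightarrow> ('a \<Rightarrow> real) \<Rightarrow> ('a \<Rightarrow> real) \<Rightarrow> real \<Rightarrow> real" where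
  "total_payment f S u c r = (\<Sum>i\<in>S. P_rate f (u i) r (c i))"

text \<open>Stopping rate: decreasing r from infinity, the first value where the total payment equals B,
  i.e. the largest r > 0 with total payment equal to B.\<close>
definition is_stopping_rate :: "(real \<Rightarrow> real) \<Rightarrow> 'a set \<Rightarrow> ('a \<Rightarrow> real) \<Rightarrow> ('a \<Rightarrow> real) \<Rightarrow> real \<Rightarrow> real \<Rightarrow> bool" where
  "is_stopping_rate f S u c B r \<longleftrightarrow>
     r > 0 \<and> total_payment f S u c r = B \<and> (\<forall>r'>r. total_payment f S u c r' \<noteq> B)"

definition U_opt :: "'a set \<Rightarrow> ('a \<Rightarrow> real) \<Rightarrow> ('a \<Rightarrow> real) \<Rightarrow> real \<Rightarrow> real" where
  "U_opt S u c B = Sup {(\<Sum>i\<in>S. u i * \<alpha> i) | \<alpha>.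
      (\<forall>i\<in>S. 0 \<le> \<alpha> i \<and> \<alpha> i \<le> 1) \<and> (\<Sum>i\<in>S. c i * \<alpha> i) \<le> B}"

end

theory Submission imports Defs begin

text \<open>
  Write \<open>e = exp 1\<close>. On \<open>[0, e - 1]\<close> the function \<open>F(y) = (r e - y)(1 - ln (e - y/r))\<close> is a
  primitive of \<open>f_r\<close> with \<open>F(r (e - 1)) = r\<close>, which gives the closed form
  \<open>Q_r(x) = r (e ln (e - a) + 1 - e + a)\<close> for \<open>a = x/r \<le> e - 1\<close> and \<open>Q_r(x) = 0\<close> beyond.
  With it one checks, for every item and every fraction \<open>\<alpha> \<in> [0,1]\<close>,
  \<open>u f_r(c/u) \<ge> (1 - 1/e) u \<alpha> + (P_r(c) - c \<alpha>) / (e r)\<close>: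
  the difference is \<open>u (e - 1 - a)(1 - \<alpha>)/e\<close> or \<open>u \<alpha> (a - (e - 1))/e\<close>, both nonnegative.
  At the stopping rate the payments sum to \<open>B\<close>, so for a feasible \<open>\<alpha>\<close> the correction terms
  add up to \<open>(B - \<Sum> c \<alpha>)/(e r) \<ge> 0\<close>; taking the supremum over \<open>\<alpha>\<close> yields the bound.
\<close>

lemma has_real_derivative_f_ln_primitive:
  fixes r y :: real
  assumes "r > 0" and "y / r < exp 1"
  shows "((\<lambda>y. (r * exp 1 - y) * (1 - ln (exp 1 - y / r))) has_real_derivative ln (exp 1 - y / r))
           (at y within X)"
proof -
  have "exp 1 - y / r > 0" using assms by simp
  moreover have "r * exp 1 - y = r * (exp 1 - y / r)" using assms by (simp add: field_simps)
  ultimately show ?thesis using assms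
    by (intro derivative_eq_intros refl) auto
qed

lemma f_rate_f_ln_eq_0:
  assumes "r > 0" and "y > r * (exp 1 - 1)"
  shows "f_rate f_ln r y = 0"
  using assms by (auto simp: f_rate_def f_ln_def field_simps)

lemma has_integral_f_rate_f_ln:
  fixes r x :: real
  assumes r: "r > 0" and "x \<ge> 0" and xM: "x \<le> r * (exp 1 - 1)"
  shows "(f_rate f_ln r has_integral r - (r * exp 1 - x) * (1 - ln (exp 1 - x / r))) {x..}"
proof -
  define M where "M = r * (exp 1 - 1)"
  define F where "F = (\<lambda>y::real. (r * exp 1 - y) * (1 - ln (exp 1 - y / r)))"
  have in_support: "0 \<le> y / r \<and> y / r \<le> exp 1 - 1" if "y \<in> {x..M}" for y
    using that r \<open>x \<ge> 0\<close> by (auto simp: M_def field_simps)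
  have "(F has_real_derivative f_rate f_ln r y) (at y within {x..M})" if "y \<in> {x..M}" for y
    using in_support[OF that] r unfolding F_def
    by (auto simp: f_rate_def f_ln_def intro!: has_real_derivative_f_ln_primitive)
  then have "(f_rate f_ln r has_integral F M - F x) {x..M}"
    using xM by (intro fundamental_theorem_of_calculus)
      (auto simp: M_def has_real_derivative_iff_has_vector_derivative)
  then have "((\<lambda>y. if y \<in> {x..M} then f_rate f_ln r y else 0) has_integral F M - F x) {x..}"
    by (subst has_integral_restrict) auto
  moreover have "(if y \<in> {x..M} then f_rate f_ln r y else 0) = f_rate f_ln r y" if "y \<in> {x..}" for y
    using that f_rate_f_ln_eq_0[OF r, of y] by (auto simp: M_def)
  ultimately have "(f_rate f_ln r has_integral F M - F x) {x..}"
    by (rule has_integral_eq[rotated])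
  moreover have "F M = r" using r by (simp add: F_def M_def field_simps)
  ultimately show ?thesis by (simp add: F_def)
qed

lemma integral_f_rate_f_ln_eq_0:
  assumes r: "r > 0" and "x > r * (exp 1 - 1)"
  shows "integral {x..} (f_rate f_ln r) = 0"
proof -
  have "integral {x..} (f_rate f_ln r) = integral {x..} (\<lambda>y. 0::real)"
    using assms f_rate_f_ln_eq_0[OF r] by (intro integral_cong) auto
  then show ?thesis by simp
qed

lemma Q_rate_f_ln:
  fixes r x :: real
  assumes r: "r > 0" and x: "x \<ge> 0"
  shows "Q_rate f_ln r x =
    (if x / r \<le> exp 1 - 1 then r * (exp 1 * ln (exp 1 - x / r) + 1 - exp 1 + x / r) else 0)"
proof (cases "x / r \<le> exp 1 - 1")
  case True
  then have "x \<le> r * (exp 1 - 1)" using r by (simp add: field_simps)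
  from integral_unique[OF has_integral_f_rate_f_ln[OF r x this]]
  have "integral {x..} (f_rate f_ln r) = r - (r * exp 1 - x) * (1 - ln (exp 1 - x / r))" .
  moreover have "f_rate f_ln r x = ln (exp 1 - x / r)"
    using True r x by (simp add: f_rate_def f_ln_def)
  moreover have "r * exp 1 - x = r * (exp 1 - x / r)" "x = r * (x / r)"
    using r by (simp_all add: field_simps)
  ultimately show ?thesis
    using True unfolding Q_rate_def by (simp add: algebra_simps)
next
  case False
  then have "x > r * (exp 1 - 1)" using r by (simp add: field_simps)
  then show ?thesis
    using False integral_f_rate_f_ln_eq_0[OF r] f_rate_f_ln_eq_0[OF r]
    by (simp add: Q_rate_def)
qed

lemma f_ln_lower_bound:
  fixes a \<alpha> :: real
  assumes "a \<ge> 0" and "0 \<le> \<alpha>" "\<alpha> \<le> 1"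
  shows "(1 - 1 / exp 1) * \<alpha> + (Q_rate f_ln 1 a - a * \<alpha>) / exp 1 \<le> f_ln a"
proof (cases "a \<le> exp 1 - 1")
  case True
  have "(1 - 1 / exp 1) * \<alpha> + (Q_rate f_ln 1 a - a * \<alpha>) / exp 1
        = ln (exp 1 - a) - (exp 1 - 1 - a) * (1 - \<alpha>) / exp 1"
    using True \<open>a \<ge> 0\<close> by (simp add: Q_rate_f_ln field_simps)
  moreover have "(exp 1 - 1 - a) * (1 - \<alpha>) \<ge> 0"
    using True assms by simp
  ultimately show ?thesis
    using True \<open>a \<ge> 0\<close> by (simp add: f_ln_def)
next
  case False
  have "(1 - 1 / exp 1) * \<alpha> + (Q_rate f_ln 1 a - a * \<alpha>) / exp 1 = - \<alpha> * (a - (exp 1 - 1)) / exp 1"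
    using False \<open>a \<ge> 0\<close> by (simp add: Q_rate_f_ln field_simps)
  moreover have "\<alpha> * (a - (exp 1 - 1)) \<ge> 0"
    using False assms by simp
  ultimately show ?thesis
    using False by (simp add: f_ln_def)
qed

lemma utility_lower_bound_single_item:
  fixes u c r \<alpha> :: real
  assumes u: "u > 0" and "c \<ge> 0" and r: "r > 0" and "0 \<le> \<alpha>" "\<alpha> \<le> 1"
  shows "(1 - 1 / exp 1) * (u * \<alpha>) + (P_rate f_ln u r c - c * \<alpha>) / (exp 1 * r)
           \<le> u * f_rate f_ln r (c / u)"
proof -
  define a where "a = c / u / r"
  have "a \<ge> 0" using assms by (simp add: a_def)
  have c: "c = u * r * a" using u r by (simp add: a_def)
  have "P_rate f_ln u r c = u * r * Q_rate f_ln 1 a"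
    using r u \<open>a \<ge> 0\<close> \<open>c \<ge> 0\<close> by (simp add: P_rate_def Q_rate_f_ln a_def)
  then have "(1 - 1 / exp 1) * (u * \<alpha>) + (P_rate f_ln u r c - c * \<alpha>) / (exp 1 * r)
        = u * ((1 - 1 / exp 1) * \<alpha> + (Q_rate f_ln 1 a - a * \<alpha>) / exp 1)"
    using r by (simp add: c field_simps)
  also have "\<dots> \<le> u * f_ln a"
    using f_ln_lower_bound[OF \<open>a \<ge> 0\<close> assms(4,5)] u by simp
  finally show ?thesis by (simp add: f_rate_def a_def)
qed

lemma U_opt_le:
  assumes "B \<ge> 0"
    and "\<And>\<alpha>. \<forall>i\<in>S. 0 \<le> \<alpha> i \<and> \<alpha> i \<le> 1 \<Longrightarrow> (\<Sum>i\<in>S. c i * \<alpha> i) \<le> B \<Longrightarrow> (\<Sum>i\<in>S. u i * \<alpha> i) \<le> M"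
  shows "U_opt S u c B \<le> M"
proof -
  have "(\<Sum>i\<in>S. u i * (\<lambda>_. 0) i) \<in> {(\<Sum>i\<in>S. u i * \<alpha> i) | \<alpha>.
          (\<forall>i\<in>S. 0 \<le> \<alpha> i \<and> \<alpha> i \<le> 1) \<and> (\<Sum>i\<in>S. c i * \<alpha> i) \<le> B}"
    using \<open>B \<ge> 0\<close> by fastforce
  then show ?thesis
    unfolding U_opt_def using assms(2) by (intro cSup_least) auto
qed

theorem lemma4:
  fixes S :: "'a set" and u c :: "'a \<Rightarrow> real" and B r :: real
  assumes "finite S"
    and "B > 0"
    and "\<forall>i\<in>S. u i > 0"
    and "\<forall>i\<in>S. c i \<ge> 0"
    and "is_stopping_rate f_ln S u c B r"
  shows "(\<Sum>i\<in>S. u i * f_rate f_ln r (c i / u i)) \<ge> (1 - 1 / exp 1) * U_opt S u c B"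
proof -
  from assms(5) have r: "r > 0" and payments: "(\<Sum>i\<in>S. P_rate f_ln (u i) r (c i)) = B"
    by (auto simp: is_stopping_rate_def total_payment_def)
  define L where "L = (\<Sum>i\<in>S. u i * f_rate f_ln r (c i / u i))"
  define k :: real where "k = 1 - 1 / exp 1"
  have k: "k > 0" by (simp add: k_def)
  have "(\<Sum>i\<in>S. u i * \<alpha> i) \<le> L / k"
    if \<alpha>: "\<forall>i\<in>S. 0 \<le> \<alpha> i \<and> \<alpha> i \<le> 1" and budget: "(\<Sum>i\<in>S. c i * \<alpha> i) \<le> B" for \<alpha>
  proof -
    have "k * (\<Sum>i\<in>S. u i * \<alpha> i) + (B - (\<Sum>i\<in>S. c i * \<alpha> i)) / (exp 1 * r)
        = (\<Sum>i\<in>S. k * (u i * \<alpha> i) + (P_rate f_ln (u i) r (c i) - c i * \<alpha> i) / (exp 1 * r))"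
      by (simp add: sum.distrib sum_distrib_left sum_divide_distrib[symmetric] sum_subtractf payments)
    also have "\<dots> \<le> L"
      unfolding L_def k_def using assms(3,4) r \<alpha>
      by (intro sum_mono utility_lower_bound_single_item) auto
    finally have "k * (\<Sum>i\<in>S. u i * \<alpha> i) + (B - (\<Sum>i\<in>S. c i * \<alpha> i)) / (exp 1 * r) \<le> L" .
    moreover have "(B - (\<Sum>i\<in>S. c i * \<alpha> i)) / (exp 1 * r) \<ge> 0"
      using budget r by simp
    ultimately have "k * (\<Sum>i\<in>S. u i * \<alpha> i) \<le> L" by linarith
    then show ?thesis
      using k by (simp add: pos_le_divide_eq mult.commute)
  qed
  then have "U_opt S u c B \<le> L / k"
    using \<open>B > 0\<close> by (intro U_opt_le) auto
  then have "k * U_opt S u c B \<le> L"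
    using k by (simp add: pos_le_divide_eq mult.commute)
  then show ?thesis by (simp add: L_def k_def)
qed

end
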